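(* In the setting of the context, suppose for every $i\in\mathcal D$: $k^C_{1,i}<1$, $k^C_{2,i}<R^C_{ti}$, $k^C_{3,i}>0$, $k^V_{1,i}<1$, $k^V_{2,i}<R^V_{ti}$, $0<k^V_{3,i}<\frac{1}{L^V_{ti}}(k^V_{1,i}-1)(k^V_{2,i}-R^V_{ti})$. Fix $\bar\sigma>0$ and put $\eta_i=\bar\sigma C_{ti}$, $p^C_{22,i}=\frac{L^C_{ti}\eta_i}{C_{ti}(1-k^C_{1,i})}$, $h_i=L^V_{ti}k^V_{3,i}-(k^V_{1,i}-1)(k^V_{2,i}-R^V_{ti})$, $$P_i=\mathrm{blockdiag}\Big(\eta_i,\;\begin{bmatrix}p^C_{22,i}&0\\0&\frac{k^C_{3,i}}{L^C_{ti}}p^C_{22,i}\end{bmatrix},\;\frac{\eta_i}{C_{ti}h_i}\begin{bmatrix}L^V_{ti}(k^V_{2,i}-R^V_{ti})&L^V_{ti}k^V_{3,i}\\L^V_{ti}k^V_{3,i}&k^V_{3,i}(k^V_{1,i}-1)\end{bmatrix}\Big),$$ and $\mathbf P=\mathrm{diag}(P_1,\dots,P_N)$. Then $\mathbf F^T\mathbf P+\mathbf P\mathbf F\le0$.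
   Context: Let $N\ge1$, $\mathcal D=\{1,\dots,N\}$, $\mathcal G_{el}$ an undirected graph on $\mathcal D$ with neighbor sets $\mathcal N_i$; for each $i$ let $C_{ti},L^C_{ti},R^C_{ti},L^V_{ti},R^V_{ti},R_{Li}>0$ and for each edge $R_{ij}=R_{ji}>0$. Let $$F_i=\begin{bmatrix}0&\frac{1}{C_{ti}}&0&\frac{1}{C_{ti}}&0\\ \frac{k^C_{1,i}-1}{L^C_{ti}}&\frac{k^C_{2,i}-R^C_{ti}}{L^C_{ti}}&\frac{k^C_{3,i}}{L^C_{ti}}&0&0\\ 0&-1&0&0&0\\ \frac{k^V_{1,i}-1}{L^V_{ti}}&0&0&\frac{k^V_{2,i}-R^V_{ti}}{L^V_{ti}}&\frac{k^V_{3,i}}{L^V_{ti}}\\ -1&0&0&0&0\end{bmatrix},$$ $e_1=(1,0,0,0,0)^T$, and let $\mathbf F\in\mathbb{R}^{5N\times5N}$ (closed-loop matrix of the cluster of microgrids) have $(i,i)$ block $F_i-\Big(\frac{1}{R_{Li}C_{ti}}+\sum_{j\in\mathcal N_i}\frac{1}{R_{ij}C_{ti}}\Big)e_1e_1^T$ and $(i,j)$ block ($j\ne i$) equal to $\frac{1}{R_{ij}C_{ti}}e_1e_1^T$ if $j\in\mathcal N_i$, $0$ otherwise. Block sizes in $\mathrm{blockdiag}$ are $1,2,2$. Matrix inequalities are in the semidefinite sense. *)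

theory Defs
  imports "Jordan_Normal_Form.Matrix"
begin

text \<open>Subsystems are indexed by i in {0..<N} (0-based). The graph is given by a
  relation E on {0..<N}; the neighbour set of i is {j. j < N \<and> E i j}.
  Global index of the a-th state (a < 5) of subsystem i is 5*i + a.\<close>

definition neg_semidef :: "nat \<Rightarrow> real mat \<Rightarrow> bool" where
  "neg_semidef n A \<longleftrightarrow> A \<in> carrier_mat n n \<and> (\<forall>x \<in> carrier_vec n. x \<bullet> (A *\<^sub>v x) \<le> 0)"

definition F_loc :: "real \<Rightarrow> real \<Rightarrow> real \<Rightarrow> real \<Rightarrow> real \<Rightarrow>
   real \<Rightarrow> real \<Rightarrow> real \<Rightarrow> real \<Rightarrow> real \<Rightarrow> real \<Rightarrow> real mat" where
  "F_loc Ct LC RC LV RV k1C k2C k3C k1V k2V k3V = mat_of_rows_list 5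
     [[0, 1/Ct, 0, 1/Ct, 0],
      [(k1C - 1)/LC, (k2C - RC)/LC, k3C/LC, 0, 0],
      [0, -1, 0, 0, 0],
      [(k1V - 1)/LV, 0, 0, (k2V - RV)/LV, k3V/LV],
      [-1, 0, 0, 0, 0]]"

definition P_loc :: "real \<Rightarrow> real \<Rightarrow> real \<Rightarrow> real \<Rightarrow> real \<Rightarrow> real \<Rightarrow>
   real \<Rightarrow> real \<Rightarrow> real \<Rightarrow> real \<Rightarrow> real \<Rightarrow> real \<Rightarrow> real mat" where
  "P_loc sigma Ct LC RC LV RV k1C k2C k3C k1V k2V k3V =
    (let eta = sigma * Ct;
         p22 = LC * eta / (Ct * (1 - k1C));
         h = LV * k3V - (k1V - 1) * (k2V - RV);
         c = eta / (Ct * h)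
     in mat_of_rows_list 5
     [[eta, 0, 0, 0, 0],
      [0, p22, 0, 0, 0],
      [0, 0, k3C / LC * p22, 0, 0],
      [0, 0, 0, c * (LV * (k2V - RV)), c * (LV * k3V)],
      [0, 0, 0, c * (LV * k3V), c * (k3V * (k1V - 1))]])"

definition F_big :: "nat \<Rightarrow> (nat \<Rightarrow> nat \<Rightarrow> bool) \<Rightarrow> (nat \<Rightarrow> nat \<Rightarrow> real) \<Rightarrow> (nat \<Rightarrow> real) \<Rightarrow>
   (nat \<Rightarrow> real) \<Rightarrow> (nat \<Rightarrow> real) \<Rightarrow> (nat \<Rightarrow> real) \<Rightarrow> (nat \<Rightarrow> real) \<Rightarrow> (nat \<Rightarrow> real) \<Rightarrow>
   (nat \<Rightarrow> real) \<Rightarrow> (nat \<Rightarrow> real) \<Rightarrow> (nat \<Rightarrow> real) \<Rightarrow> (nat \<Rightarrow> real) \<Rightarrow> (nat \<Rightarrow> real) \<Rightarrow> (nat \<Rightarrow> real) \<Rightarrow>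
   real mat" where
  "F_big N E R RL Ct LC RC LV RV k1C k2C k3C k1V k2V k3V =
    mat (5*N) (5*N) (\<lambda>(r, c).
      let i = r div 5; a = r mod 5; j = c div 5; b = c mod 5 in
      if i = j then
        F_loc (Ct i) (LC i) (RC i) (LV i) (RV i) (k1C i) (k2C i) (k3C i) (k1V i) (k2V i) (k3V i) $$ (a, b)
        - (if a = 0 \<and> b = 0
           then 1 / (RL i * Ct i) + (\<Sum>j' \<in> {j'. j' < N \<and> E i j'}. 1 / (R i j' * Ct i))
           else 0)
      else if E i j \<and> a = 0 \<and> b = 0 then 1 / (R i j * Ct i) else 0)"

definition P_big :: "nat \<Rightarrow> real \<Rightarrow> (nat \<Rightarrow> real) \<Rightarrow> (nat \<Rightarrow> real) \<Rightarrow> (nat \<Rightarrow> real) \<Rightarrow>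
   (nat \<Rightarrow> real) \<Rightarrow> (nat \<Rightarrow> real) \<Rightarrow> (nat \<Rightarrow> real) \<Rightarrow> (nat \<Rightarrow> real) \<Rightarrow> (nat \<Rightarrow> real) \<Rightarrow>
   (nat \<Rightarrow> real) \<Rightarrow> (nat \<Rightarrow> real) \<Rightarrow> (nat \<Rightarrow> real) \<Rightarrow> real mat" where
  "P_big N sigma Ct LC RC LV RV k1C k2C k3C k1V k2V k3V =
    mat (5*N) (5*N) (\<lambda>(r, c).
      let i = r div 5; a = r mod 5; j = c div 5; b = c mod 5 in
      if i = j then
        P_loc sigma (Ct i) (LC i) (RC i) (LV i) (RV i) (k1C i) (k2C i) (k3C i) (k1V i) (k2V i) (k3V i) $$ (a, b)
      else 0)"

end

theory Submission
  imports Defs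
begin

text \<open>Write the quadratic form of F^T P + P F as 2 <P x, F x>. Both matrices are block diagonal
  up to couplings between the capacitor voltages, so <P x, F x> splits into one term per
  microgrid plus a coupling term. Within a microgrid the entries of P are chosen so that all
  cross terms cancel: what remains is a nonpositive combination of two squares and
  sigma C_t v_i times the coupling input. The factor C_t cancels the 1/C_t of the coupling,
  which leaves minus the load dissipation and minus the Laplacian quadratic form
  1/2 sum_ij (v_i - v_j)^2 / R_ij of the line network, both nonpositive.\<close>

lemma sum_lessThan_mult_blocks:
  fixes g :: "nat \<Rightarrow> 'a::comm_monoid_add"
  shows "(\<Sum>r<m * N. g r) = (\<Sum>i<N. \<Sum>a<m. g (m * i + a))"
proof -
  have "(\<Sum>r<m * N. g r) = (\<Sum>i<N. sum g {i * m..<i * m + m})"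
    by (metis sum.nat_group mult.commute)
  also have "\<dots> = (\<Sum>i<N. \<Sum>a<m. g (m * i + a))"
  proof (rule sum.cong)
    fix i
    have "sum g {0 + i * m..<m + i * m} = (\<Sum>a<m. g (m * i + a))"
      unfolding sum.atLeastLessThan_shift_bounds atLeast0LessThan by (simp add: mult.commute add.commute)
    then show "sum g {i * m..<i * m + m} = (\<Sum>a<m. g (m * i + a))"
      by (simp add: add.commute)
  qed simp
  finally show ?thesis .
qed

lemma scalar_prod_blocks:
  assumes "u \<in> carrier_vec (m * N)" "v \<in> carrier_vec (m * N)"
  shows "u \<bullet> v = (\<Sum>i<N. \<Sum>a<m. u $ (m * i + a) * v $ (m * i + a))"
  using assms by (simp add: scalar_prod_def atLeast0LessThan sum_lessThan_mult_blocks)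

lemma lyapunov_quadratic_form:
  fixes F P :: "'a::comm_ring_1 mat"
  assumes F: "F \<in> carrier_mat n n" and P: "P \<in> carrier_mat n n"
    and P_sym: "transpose_mat P = P" and x: "x \<in> carrier_vec n"
  shows "x \<bullet> ((transpose_mat F * P + P * F) *\<^sub>v x) = 2 * ((P *\<^sub>v x) \<bullet> (F *\<^sub>v x))"
proof -
  have Px: "P *\<^sub>v x \<in> carrier_vec n" and Fx: "F *\<^sub>v x \<in> carrier_vec n"
    using F P x by auto
  have "x \<bullet> (transpose_mat F *\<^sub>v (P *\<^sub>v x)) = (transpose_mat F *\<^sub>v (P *\<^sub>v x)) \<bullet> x"
    using F Px x by (intro comm_scalar_prod[of _ n]) auto
  also have "\<dots> = (P *\<^sub>v x) \<bullet> (F *\<^sub>v x)"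
    by (rule transpose_vec_mult_scalar[OF F x Px])
  finally have FtP: "x \<bullet> (transpose_mat F *\<^sub>v (P *\<^sub>v x)) = (P *\<^sub>v x) \<bullet> (F *\<^sub>v x)" .
  have PF: "x \<bullet> (P *\<^sub>v (F *\<^sub>v x)) = (P *\<^sub>v x) \<bullet> (F *\<^sub>v x)"
    using transpose_vec_mult_scalar[OF P Fx x] P_sym by simp
  have "(transpose_mat F * P + P * F) *\<^sub>v x = transpose_mat F *\<^sub>v (P *\<^sub>v x) + P *\<^sub>v (F *\<^sub>v x)"
    using F P x by (simp add: add_mult_distrib_mat_vec[of _ n n])
  also have "x \<bullet> \<dots> = x \<bullet> (transpose_mat F *\<^sub>v (P *\<^sub>v x)) + x \<bullet> (P *\<^sub>v (F *\<^sub>v x))"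
    using F P Px Fx by (intro scalar_prod_add_distrib[OF x]) auto
  finally show ?thesis
    unfolding FtP PF mult_2 .
qed

lemma neg_semidef_lyapunovI:
  assumes F: "F \<in> carrier_mat n n" and P: "P \<in> carrier_mat n n" and P_sym: "transpose_mat P = P"
    and dissipative: "\<And>x. x \<in> carrier_vec n \<Longrightarrow> (P *\<^sub>v x) \<bullet> (F *\<^sub>v x) \<le> 0"
  shows "neg_semidef n (transpose_mat F * P + P * F)"
  unfolding neg_semidef_def
  using F P dissipative lyapunov_quadratic_form[OF F P P_sym] by auto

text \<open>N diagonal blocks of size m plus couplings between the first coordinates of the blocks:
  the shape of both the closed-loop matrix and the Lyapunov matrix.\<close>

definition block_coupled_mat :: "nat \<Rightarrow> nat \<Rightarrow> (nat \<Rightarrow> 'a mat) \<Rightarrow> (nat \<Rightarrow> nat \<Rightarrow> 'a) \<Rightarrow> 'a::semiring_0 mat"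
  where "block_coupled_mat m N B K = mat (m * N) (m * N) (\<lambda>(r, c).
     (if r div m = c div m then B (r div m) $$ (r mod m, c mod m) else 0)
     + (if r mod m = 0 \<and> c mod m = 0 then K (r div m) (c div m) else 0))"

lemma block_coupled_mat_carrier: "block_coupled_mat m N B K \<in> carrier_mat (m * N) (m * N)"
  by (simp add: block_coupled_mat_def)

lemma block_index_less:
  assumes "i < N" "a < m"
  shows "m * i + a < m * (N::nat)"
proof -
  have "m * i + a < m * Suc i" using assms(2) by simp
  also have "\<dots> \<le> m * N" using assms(1) by (intro mult_le_mono2) simp
  finally show ?thesis .
qed

lemma block_coupled_mat_index:
  assumes "i < N" "j < N" "a < m" "b < m"
  shows "block_coupled_mat m N B K $$ (m * i + a, m * j + b)
    = (if i = j then B i $$ (a, b) else 0) + (if a = 0 \<and> b = 0 then K i j else 0)"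
  using assms by (simp add: block_coupled_mat_def block_index_less)

lemma block_coupled_mult_vec_index:
  fixes B :: "nat \<Rightarrow> 'a::comm_semiring_1 mat"
  assumes x: "x \<in> carrier_vec (m * N)" and i: "i < N" and a: "a < m"
  shows "(block_coupled_mat m N B K *\<^sub>v x) $ (m * i + a)
    = (\<Sum>b<m. B i $$ (a, b) * x $ (m * i + b)) + (if a = 0 then \<Sum>j<N. K i j * x $ (m * j) else 0)"
proof -
  have m: "0 < m" using a by simp
  have dim: "dim_row (block_coupled_mat m N B K) = m * N" "dim_col (block_coupled_mat m N B K) = m * N"
    by (simp_all add: block_coupled_mat_def)
  have "(block_coupled_mat m N B K *\<^sub>v x) $ (m * i + a)
      = (\<Sum>c<m * N. block_coupled_mat m N B K $$ (m * i + a, c) * x $ c)"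
    using x block_index_less[OF i a] by (auto simp: dim scalar_prod_def atLeast0LessThan intro!: sum.cong)
  also have "\<dots> = (\<Sum>j<N. \<Sum>b<m. block_coupled_mat m N B K $$ (m * i + a, m * j + b) * x $ (m * j + b))"
    by (rule sum_lessThan_mult_blocks)
  also have "\<dots> = (\<Sum>j<N. (if i = j then \<Sum>b<m. B i $$ (a, b) * x $ (m * i + b) else 0)
      + (if a = 0 then K i j * x $ (m * j) else 0))"
  proof (rule sum.cong)
    fix j assume "j \<in> {..<N}"
    then have "(\<Sum>b<m. block_coupled_mat m N B K $$ (m * i + a, m * j + b) * x $ (m * j + b))
      = (\<Sum>b<m. (if i = j then B i $$ (a, b) * x $ (m * i + b) else 0)
          + (if a = 0 \<and> b = 0 then K i j * x $ (m * j + b) else 0))"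
      using i a by (intro sum.cong) (auto simp: block_coupled_mat_index distrib_right)
    also have "\<dots> = (if i = j then \<Sum>b<m. B i $$ (a, b) * x $ (m * i + b) else 0)
        + (if a = 0 then K i j * x $ (m * j) else 0)"
      using m by (cases "i = j"; cases "a = 0") (simp_all add: sum.distrib)
    finally show "(\<Sum>b<m. block_coupled_mat m N B K $$ (m * i + a, m * j + b) * x $ (m * j + b))
      = (if i = j then \<Sum>b<m. B i $$ (a, b) * x $ (m * i + b) else 0)
        + (if a = 0 then K i j * x $ (m * j) else 0)" .
  qed simp
  also have "\<dots> = (\<Sum>b<m. B i $$ (a, b) * x $ (m * i + b)) + (if a = 0 then \<Sum>j<N. K i j * x $ (m * j) else 0)"
    using i by (simp add: sum.distrib)
  finally show ?thesis .
qed

lemma transpose_block_coupled_mat: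
  assumes B_sym: "\<And>i a b. i < N \<Longrightarrow> a < m \<Longrightarrow> b < m \<Longrightarrow> B i $$ (a, b) = B i $$ (b, a)"
    and K_sym: "\<And>i j. i < N \<Longrightarrow> j < N \<Longrightarrow> K i j = K j i"
  shows "transpose_mat (block_coupled_mat m N B K) = block_coupled_mat m N B K"
proof (rule eq_matI)
  fix r c assume "r < dim_row (block_coupled_mat m N B K)" "c < dim_col (block_coupled_mat m N B K)"
  then have rc: "r < m * N" "c < m * N" by (simp_all add: block_coupled_mat_def)
  then have "0 < m" by (cases m) auto
  with rc have "r div m < N" "c div m < N" "r mod m < m" "c mod m < m"
    by (auto simp: less_mult_imp_div_less mult.commute)
  then have "B (r div m) $$ (c mod m, r mod m) = B (r div m) $$ (r mod m, c mod m)"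
    and "K (c div m) (r div m) = K (r div m) (c div m)"
    using B_sym K_sym by auto
  then show "transpose_mat (block_coupled_mat m N B K) $$ (r, c) = block_coupled_mat m N B K $$ (r, c)"
    using rc by (auto simp: block_coupled_mat_def)
qed (simp_all add: block_coupled_mat_def)

lemma block_coupled_inner_prod:
  fixes P F :: "nat \<Rightarrow> 'a::comm_semiring_1 mat"
  assumes x: "x \<in> carrier_vec (m * N)"
  shows "(block_coupled_mat m N P (\<lambda>_ _. 0) *\<^sub>v x) \<bullet> (block_coupled_mat m N F K *\<^sub>v x)
    = (\<Sum>i<N. \<Sum>a<m. (\<Sum>b<m. P i $$ (a, b) * x $ (m * i + b))
        * ((\<Sum>b<m. F i $$ (a, b) * x $ (m * i + b))
           + (if a = 0 then \<Sum>j<N. K i j * x $ (m * j) else 0)))"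
proof -
  have "(block_coupled_mat m N P (\<lambda>_ _. 0) *\<^sub>v x) \<bullet> (block_coupled_mat m N F K *\<^sub>v x)
      = (\<Sum>i<N. \<Sum>a<m. (block_coupled_mat m N P (\<lambda>_ _. 0) *\<^sub>v x) $ (m * i + a)
          * (block_coupled_mat m N F K *\<^sub>v x) $ (m * i + a))"
    using x block_coupled_mat_carrier by (intro scalar_prod_blocks mult_mat_vec_carrier) auto
  then show ?thesis
    using x by (simp add: block_coupled_mult_vec_index cong: if_cong)
qed

lemma laplacian_form_nonpos:
  fixes W :: "nat \<Rightarrow> nat \<Rightarrow> real" and y :: "nat \<Rightarrow> real"
  assumes W_sym: "\<And>i j. i < N \<Longrightarrow> j < N \<Longrightarrow> W i j = W j i"
    and W_nonneg: "\<And>i j. i < N \<Longrightarrow> j < N \<Longrightarrow> 0 \<le> W i j"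
  shows "(\<Sum>i<N. \<Sum>j<N. W i j * (y i * y j - (y i)\<^sup>2)) \<le> 0"
proof -
  let ?S = "\<Sum>i<N. \<Sum>j<N. W i j * (y i * y j - (y i)\<^sup>2)"
  have "?S = (\<Sum>j<N. \<Sum>i<N. W i j * (y i * y j - (y i)\<^sup>2))"
    by (rule sum.swap)
  also have "\<dots> = (\<Sum>i<N. \<Sum>j<N. W i j * (y i * y j - (y j)\<^sup>2))"
  proof (intro sum.cong refl)
    fix i j assume "i \<in> {..<N}" "j \<in> {..<N}"
    then show "W j i * (y j * y i - (y j)\<^sup>2) = W i j * (y i * y j - (y j)\<^sup>2)"
      using W_sym[of i j] by (simp add: mult.commute)
  qed
  finally have "2 * ?S = ?S + (\<Sum>i<N. \<Sum>j<N. W i j * (y i * y j - (y j)\<^sup>2))"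
    by simp
  also have "\<dots> = (\<Sum>i<N. \<Sum>j<N. - (W i j * (y i - y j)\<^sup>2))"
    by (simp add: sum.distrib[symmetric] power2_eq_square algebra_simps)
  also have "\<dots> \<le> 0"
    using W_nonneg by (intro sum_nonpos) simp
  finally show ?thesis by simp
qed

text \<open>The part of the (0,0) entries of the blocks of F not in F_loc: the negated weighted
  Laplacian of the line network minus the load conductance, scaled by 1/C_t.\<close>

definition line_coupling :: "nat \<Rightarrow> (nat \<Rightarrow> nat \<Rightarrow> bool) \<Rightarrow> (nat \<Rightarrow> nat \<Rightarrow> real) \<Rightarrow>
    (nat \<Rightarrow> real) \<Rightarrow> (nat \<Rightarrow> real) \<Rightarrow> nat \<Rightarrow> nat \<Rightarrow> real"
  where "line_coupling N E R RL Ct i j =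
    (if E i j then 1 / (R i j * Ct i) else 0)
    - (if i = j then 1 / (RL i * Ct i) + (\<Sum>j' \<in> {j'. j' < N \<and> E i j'}. 1 / (R i j' * Ct i)) else 0)"

lemma line_coupling_row:
  assumes i: "i < N" and Ct: "Ct i > 0"
  shows "Ct i * y i * (\<Sum>j<N. line_coupling N E R RL Ct i j * y j)
    = - (y i)\<^sup>2 / RL i + (\<Sum>j<N. (if E i j then 1 / R i j else 0) * (y i * y j - (y i)\<^sup>2))"
proof -
  let ?W = "\<lambda>j. if E i j then 1 / R i j else 0"
  have degree: "(\<Sum>j' \<in> {j'. j' < N \<and> E i j'}. 1 / (R i j' * Ct i)) = (\<Sum>j<N. ?W j) / Ct i"
  proof -
    have neighbours: "{j'. j' < N \<and> E i j'} = {j \<in> {..<N}. E i j}" by auto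
    have "(\<Sum>j' \<in> {j'. j' < N \<and> E i j'}. 1 / (R i j' * Ct i))
        = (\<Sum>j<N. if E i j then 1 / (R i j * Ct i) else 0)"
      by (subst neighbours) (rule sum.inter_filter, simp)
    also have "\<dots> = (\<Sum>j<N. ?W j) / Ct i"
      by (simp add: sum_divide_distrib if_distrib[of "\<lambda>t. t / Ct i"] cong: if_cong)
    finally show ?thesis .
  qed
  have coupling: "line_coupling N E R RL Ct i j
      = (?W j - (if i = j then 1 / RL i + (\<Sum>k<N. ?W k) else 0)) / Ct i" for j
    unfolding line_coupling_def degree by (simp add: diff_divide_distrib add_divide_distrib)
  have row_sum: "(\<Sum>j<N. line_coupling N E R RL Ct i j * y j)
      = ((\<Sum>j<N. ?W j * y j) - (1 / RL i + (\<Sum>j<N. ?W j)) * y i) / Ct i"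
    using i by (simp add: coupling left_diff_distrib sum_subtractf sum_divide_distrib[symmetric]
        if_distrib[of "\<lambda>t. t * y _"] cong: if_cong)
  have "Ct i * y i * (\<Sum>j<N. line_coupling N E R RL Ct i j * y j)
      = y i * (\<Sum>j<N. ?W j * y j) - (y i)\<^sup>2 / RL i - (y i)\<^sup>2 * (\<Sum>j<N. ?W j)"
    unfolding row_sum using Ct by (simp add: field_simps power2_eq_square)
  also have "\<dots> = - (y i)\<^sup>2 / RL i + (\<Sum>j<N. ?W j * (y i * y j - (y i)\<^sup>2))"
    by (simp add: right_diff_distrib sum_subtractf sum_distrib_left sum_distrib_right mult_ac)
  finally show ?thesis .
qed

lemma line_coupling_form_nonpos:
  assumes E_sym: "\<And>i j. i < N \<Longrightarrow> j < N \<Longrightarrow> E i j \<longleftrightarrow> E j i"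
    and R_sym: "\<And>i j. i < N \<Longrightarrow> j < N \<Longrightarrow> E i j \<Longrightarrow> R i j = R j i"
    and R_pos: "\<And>i j. i < N \<Longrightarrow> j < N \<Longrightarrow> E i j \<Longrightarrow> R i j > 0"
    and RL_pos: "\<And>i. i < N \<Longrightarrow> RL i > 0"
    and Ct_pos: "\<And>i. i < N \<Longrightarrow> Ct i > 0"
  shows "(\<Sum>i<N. Ct i * y i * (\<Sum>j<N. line_coupling N E R RL Ct i j * y j)) \<le> 0"
proof -
  let ?W = "\<lambda>i j. if E i j then 1 / R i j else 0"
  have "(\<Sum>i<N. Ct i * y i * (\<Sum>j<N. line_coupling N E R RL Ct i j * y j))
      = (\<Sum>i<N. - (y i)\<^sup>2 / RL i) + (\<Sum>i<N. \<Sum>j<N. ?W i j * (y i * y j - (y i)\<^sup>2))"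
    using Ct_pos by (simp add: line_coupling_row sum.distrib[symmetric])
  also have "\<dots> \<le> 0"
  proof (rule add_nonpos_nonpos)
    show "(\<Sum>i<N. - (y i)\<^sup>2 / RL i) \<le> 0"
      using RL_pos by (intro sum_nonpos) (simp add: less_imp_le)
    show "(\<Sum>i<N. \<Sum>j<N. ?W i j * (y i * y j - (y i)\<^sup>2)) \<le> 0"
      using E_sym R_sym R_pos by (intro laplacian_form_nonpos) (auto simp: less_imp_le)
  qed
  finally show ?thesis .
qed

lemma P_loc_symmetric:
  assumes "a < 5" "b < 5"
  shows "P_loc sigma Ct LC RC LV RV k1C k2C k3C k1V k2V k3V $$ (a, b)
    = P_loc sigma Ct LC RC LV RV k1C k2C k3C k1V k2V k3V $$ (b, a)"
proof -
  have "a \<in> {0, 1, 2, 3, 4}" "b \<in> {0, 1, 2, 3, 4}" using assms by auto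
  then show ?thesis by (auto simp: P_loc_def Let_def mat_of_rows_list_def)
qed

text \<open>One microgrid's share of <P x, F x>, with w the coupling input of its capacitor
  equation. The choice of P makes all cross terms cancel.\<close>

lemma local_dissipation_eq:
  fixes y :: "nat \<Rightarrow> real"
  assumes "Ct > 0" "LC > 0" "LV > 0"
    and "k1C < 1" "k2V < RV" "k1V < 1" "k3V < (1 / LV) * (k1V - 1) * (k2V - RV)"
  shows "(\<Sum>a<5. (\<Sum>b<5. P_loc sigma Ct LC RC LV RV k1C k2C k3C k1V k2V k3V $$ (a, b) * y b) *
            ((\<Sum>b<5. F_loc Ct LC RC LV RV k1C k2C k3C k1V k2V k3V $$ (a, b) * y b)
             + (if a = 0 then w else 0)))
       = sigma * (k2C - RC) / (1 - k1C) * (y 1)\<^sup>2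
         + sigma / (LV * k3V - (k1V - 1) * (k2V - RV)) * ((k2V - RV) * y 3 + k3V * y 4)\<^sup>2
         + sigma * Ct * y 0 * w"
proof -
  define h where "h = LV * k3V - (k1V - 1) * (k2V - RV)"
  define K where "K = 1 - k1C"
  have "h < 0" using assms(3,7) by (simp add: field_simps h_def)
  have "K > 0" using assms(4) by (simp add: K_def)
  have k1C: "k1C = 1 - K" by (simp add: K_def)
  have k3V: "k3V = (h + (k1V - 1) * (k2V - RV)) / LV" using assms(3) by (simp add: h_def field_simps)
  have sum5: "(\<Sum>a<5. f a) = f 0 + f 1 + f 2 + f 3 + f 4" for f :: "nat \<Rightarrow> real"
    by (simp add: eval_nat_numeral)
  \<comment> \<open>Expressing k1C and k3V through the denominators K and h lets field_simps clear them.\<close>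
  show ?thesis
    unfolding sum5 P_loc_def F_loc_def Let_def mat_of_rows_list_def
    apply (simp add: Let_def)
    apply (simp only: h_def[symmetric] k1C)
    apply (simp only: k3V)
    using assms \<open>h < 0\<close> \<open>K > 0\<close> apply (simp add: field_simps power2_eq_square)
    done
qed

lemma local_dissipation_le:
  fixes y :: "nat \<Rightarrow> real"
  assumes "sigma > 0" "Ct > 0" "LC > 0" "LV > 0"
    and "k1C < 1" "k2C < RC" "k2V < RV" "k1V < 1" "k3V < (1 / LV) * (k1V - 1) * (k2V - RV)"
  shows "(\<Sum>a<5. (\<Sum>b<5. P_loc sigma Ct LC RC LV RV k1C k2C k3C k1V k2V k3V $$ (a, b) * y b) *
            ((\<Sum>b<5. F_loc Ct LC RC LV RV k1C k2C k3C k1V k2V k3V $$ (a, b) * y b)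
             + (if a = 0 then w else 0)))
       \<le> sigma * Ct * y 0 * w"
proof -
  have "sigma * (k2C - RC) / (1 - k1C) \<le> 0"
    using assms by (intro divide_nonpos_pos mult_nonneg_nonpos) auto
  then have capacitor: "sigma * (k2C - RC) / (1 - k1C) * (y 1)\<^sup>2 \<le> 0"
    by (rule mult_nonpos_nonneg) simp
  have "sigma / (LV * k3V - (k1V - 1) * (k2V - RV)) \<le> 0"
    using assms by (intro divide_nonneg_neg) (auto simp: field_simps)
  then have voltage: "sigma / (LV * k3V - (k1V - 1) * (k2V - RV))
      * ((k2V - RV) * y 3 + k3V * y 4)\<^sup>2 \<le> 0"
    by (rule mult_nonpos_nonneg) simp
  show ?thesis
    unfolding local_dissipation_eq[OF assms(2-5,7-9)] using capacitor voltage by linarith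
qed

lemma F_big_block_coupled:
  assumes "\<And>i. i < N \<Longrightarrow> \<not> E i i"
  shows "F_big N E R RL Ct LC RC LV RV k1C k2C k3C k1V k2V k3V
    = block_coupled_mat 5 N
        (\<lambda>i. F_loc (Ct i) (LC i) (RC i) (LV i) (RV i) (k1C i) (k2C i) (k3C i) (k1V i) (k2V i) (k3V i))
        (line_coupling N E R RL Ct)"
  unfolding F_big_def block_coupled_mat_def
  using assms by (intro cong_mat) (auto simp: line_coupling_def Let_def less_mult_imp_div_less mult.commute)

lemma P_big_block_coupled:
  "P_big N sigma Ct LC RC LV RV k1C k2C k3C k1V k2V k3V
    = block_coupled_mat 5 N
        (\<lambda>i. P_loc sigma (Ct i) (LC i) (RC i) (LV i) (RV i) (k1C i) (k2C i) (k3C i) (k1V i) (k2V i) (k3V i))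
        (\<lambda>_ _. 0)"
  unfolding P_big_def block_coupled_mat_def by (intro cong_mat) (auto simp: Let_def)

theorem proposition6:
  fixes N :: nat and E :: "nat \<Rightarrow> nat \<Rightarrow> bool" and R :: "nat \<Rightarrow> nat \<Rightarrow> real"
    and RL Ct LC RC LV RV k1C k2C k3C k1V k2V k3V :: "nat \<Rightarrow> real"
    and sigma :: real
  assumes "N \<ge> 1"
    and E_sym: "\<And>i j. i < N \<Longrightarrow> j < N \<Longrightarrow> E i j \<longleftrightarrow> E j i"
    and E_irrefl: "\<And>i. i < N \<Longrightarrow> \<not> E i i"
    and R_sym: "\<And>i j. i < N \<Longrightarrow> j < N \<Longrightarrow> E i j \<Longrightarrow> R i j = R j i"
    and R_pos: "\<And>i j. i < N \<Longrightarrow> j < N \<Longrightarrow> E i j \<Longrightarrow> R i j > 0"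
    and pos: "\<And>i. i < N \<Longrightarrow> Ct i > 0 \<and> LC i > 0 \<and> RC i > 0 \<and> LV i > 0 \<and> RV i > 0 \<and> RL i > 0"
    and gains: "\<And>i. i < N \<Longrightarrow> k1C i < 1 \<and> k2C i < RC i \<and> k3C i > 0 \<and> k1V i < 1 \<and> k2V i < RV i
                 \<and> 0 < k3V i \<and> k3V i < (1 / LV i) * (k1V i - 1) * (k2V i - RV i)"
    and "sigma > 0"
  shows "neg_semidef (5*N)
     (transpose_mat (F_big N E R RL Ct LC RC LV RV k1C k2C k3C k1V k2V k3V)
        * P_big N sigma Ct LC RC LV RV k1C k2C k3C k1V k2V k3V
      + P_big N sigma Ct LC RC LV RV k1C k2C k3C k1V k2V k3V
        * F_big N E R RL Ct LC RC LV RV k1C k2C k3C k1V k2V k3V)"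
proof -
  let ?F_i = "\<lambda>i. F_loc (Ct i) (LC i) (RC i) (LV i) (RV i) (k1C i) (k2C i) (k3C i) (k1V i) (k2V i) (k3V i)"
  let ?P_i = "\<lambda>i. P_loc sigma (Ct i) (LC i) (RC i) (LV i) (RV i) (k1C i) (k2C i) (k3C i) (k1V i) (k2V i) (k3V i)"
  let ?K = "line_coupling N E R RL Ct"
  have P_sym: "transpose_mat (block_coupled_mat 5 N ?P_i (\<lambda>_ _. 0)) = block_coupled_mat 5 N ?P_i (\<lambda>_ _. 0)"
    by (intro transpose_block_coupled_mat P_loc_symmetric refl)
  have F: "F_big N E R RL Ct LC RC LV RV k1C k2C k3C k1V k2V k3V = block_coupled_mat 5 N ?F_i ?K"
    using E_irrefl by (rule F_big_block_coupled)
  show ?thesis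
    unfolding F P_big_block_coupled
  proof (rule neg_semidef_lyapunovI[OF block_coupled_mat_carrier block_coupled_mat_carrier P_sym])
    fix x :: "real vec" assume x: "x \<in> carrier_vec (5 * N)"
    let ?w = "\<lambda>i. \<Sum>j<N. ?K i j * x $ (5 * j)"
    have "(block_coupled_mat 5 N ?P_i (\<lambda>_ _. 0) *\<^sub>v x) \<bullet> (block_coupled_mat 5 N ?F_i ?K *\<^sub>v x)
        = (\<Sum>i<N. \<Sum>a<5. (\<Sum>b<5. ?P_i i $$ (a, b) * x $ (5 * i + b))
            * ((\<Sum>b<5. ?F_i i $$ (a, b) * x $ (5 * i + b)) + (if a = 0 then ?w i else 0)))"
      by (rule block_coupled_inner_prod[OF x])
    also have "\<dots> \<le> (\<Sum>i<N. sigma * Ct i * x $ (5 * i + 0) * ?w i)"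
      using pos gains \<open>sigma > 0\<close> by (intro sum_mono local_dissipation_le) auto
    also have "\<dots> = sigma * (\<Sum>i<N. Ct i * x $ (5 * i) * ?w i)"
      by (simp add: sum_distrib_left mult.assoc)
    also have "\<dots> \<le> 0"
      using \<open>sigma > 0\<close> pos
      by (intro mult_nonneg_nonpos line_coupling_form_nonpos E_sym R_sym R_pos) auto
    finally show "(block_coupled_mat 5 N ?P_i (\<lambda>_ _. 0) *\<^sub>v x) \<bullet> (block_coupled_mat 5 N ?F_i ?K *\<^sub>v x) \<le> 0" .
  qed
qed

end
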